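(* Fix $\alpha>0$, and let $h:[0,\infty)\to[0,\infty)$ be an increasing function with $h(t)\to\infty$ as $t\to\infty$ such that, for some $\rho\in(0,c_1)$, $\log h(t)<\rho\,(\alpha\wedge1)\log\log t$ for all sufficiently large $t$, where $$c_1:=\int_0^1\frac{\min\{2s,2-2s\}}{s+(\mathrm{e}-1)^{-1}}\,\mathrm{d}s\approx 0.480156 .$$ Then there exists a random variable $X$ taking values in $[1,\infty)$, whose tail function $t\mapsto\mathbb{P}(X\ge t)$ is log-convex on $[1,\infty)$, satisfying $\mathbb{E}[X^p]\le\frac{C}{\alpha-p}$ for all $p\in(0,\alpha)$ and some constant $C>0$, and such that $$\limsup_{t\to\infty}\frac{t^\alpha\,\mathbb{P}(X\ge t)}{h(t)}\ge1.$$
   Context: $\alpha\wedge1=\min(\alpha,1)$. A positive function $f$ is log-convex on an interval if $\log f$ is convex there. *)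

theory Defs
  imports "HOL-Probability.Probability"
begin

definition c1 :: real where
  "c1 = integral {0..1} (\<lambda>u::real. min (2*u) (2 - 2*u) / (u + 1 / (exp 1 - 1)))"

definition log_convex_on :: "real set \<Rightarrow> (real \<Rightarrow> real) \<Rightarrow> bool" where
  "log_convex_on S f \<longleftrightarrow> (\<forall>x\<in>S. f x > 0) \<and> convex_on S (\<lambda>x. ln (f x))"

end

theory Submission imports Defs "HOL-Real_Asymp.Real_Asymp" begin

text \<open>Take \<open>X = 1 + Y\<close>, where \<open>Y\<close> is exponential with mean \<open>T\<^sub>k\<close> with probability \<open>c\<^sub>k\<close>.
  Such a mixture of exponentials has a log-convex tail by Hoelder's inequality. Since
  \<open>\<rho> < c\<^sub>1 \<le> 1\<close>, eventually \<open>h t < ln t\<close>; along the scales \<open>T\<^sub>k = exp (2\<^sup>k S)\<close> choose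
  \<open>c\<^sub>k = e h(T\<^sub>k) T\<^sub>k\<^sup>-\<^sup>\<alpha> \<le> e 2\<^sup>k S exp (-\<alpha> 2\<^sup>k S)\<close>. Then \<open>P(X \<ge> T\<^sub>k) \<ge> c\<^sub>k / e\<close>, which makes
  the ratio at least 1 at every \<open>T\<^sub>k\<close>, while
  \<open>E X\<^sup>p \<lesssim> \<Sum>\<^sub>k c\<^sub>k T\<^sub>k\<^sup>p \<le> e \<Sum>\<^sub>k 2\<^sup>k S exp (-(\<alpha>-p) 2\<^sup>k S) \<lesssim> 1/(\<alpha>-p)\<close>.\<close>

lemma power_le_fact_mult_exp:
  fixes y :: real assumes "0 \<le> y" shows "y ^ N \<le> fact N * exp y"
proof -
  have s: "(\<lambda>n. y^n /\<^sub>R fact n) sums exp y" by (rule exp_converges)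
  have "y ^ N /\<^sub>R fact N \<le> exp y"
    using sum_le_suminf[OF sums_summable[OF s], of "{N}"] sums_unique[OF s] assms
    by (simp add: divide_inverse)
  then show ?thesis by (simp add: field_simps)
qed

lemma mult_exp_neg_le_diff:
  fixes x :: real assumes "0 \<le> x" shows "x * exp (-x) \<le> 2 * (exp (-x/2) - exp (-x))"
proof -
  have "x \<le> 2 * exp (x/2) - 2" using exp_ge_add_one_self[of "x/2"] by linarith
  then have "x \<le> 2 * (exp (x/2) - 1)" by simp
  then have "x * exp (-x) \<le> 2 * (exp (x/2) - 1) * exp (-x)"
    by (intro mult_right_mono) auto
  also have "\<dots> = 2 * (exp (-x/2) - exp (-x))"
    by (simp add: algebra_simps flip: exp_add)
  finally show ?thesis .
qed

text \<open>Each term is bounded by a telescoping difference.\<close>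
lemma doubling_exp_series:
  fixes \<epsilon> S :: real assumes "\<epsilon> > 0" "S > 0"
  shows "summable (\<lambda>k. 2^k*S * exp (-\<epsilon>*(2^k*S)))"
    and "(\<Sum>k. 2^k*S * exp (-\<epsilon>*(2^k*S))) \<le> 2/\<epsilon> * exp (-\<epsilon>*S/2)"
proof -
  define y :: "nat \<Rightarrow> real" where "y k = \<epsilon>*(2^k*S)/2" for k
  have term_le: "2^k*S * exp (-\<epsilon>*(2^k*S)) \<le> 2/\<epsilon> * (exp (- y k) - exp (- y (Suc k)))" for k
  proof -
    have "(\<epsilon>*(2^k*S)) * exp (-(\<epsilon>*(2^k*S))) \<le> 2 * (exp (-(\<epsilon>*(2^k*S))/2) - exp (-(\<epsilon>*(2^k*S))))"
      using assms by (intro mult_exp_neg_le_diff) auto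
    then show ?thesis using assms by (simp add: y_def field_simps)
  qed
  have partial_le: "(\<Sum>k<n. 2^k*S * exp (-\<epsilon>*(2^k*S))) \<le> 2/\<epsilon> * exp (-\<epsilon>*S/2)" for n
  proof -
    have "(\<Sum>k<n. 2^k*S * exp (-\<epsilon>*(2^k*S))) \<le> (\<Sum>k<n. 2/\<epsilon> * (exp (- y k) - exp (- y (Suc k))))"
      by (intro sum_mono term_le)
    also have "\<dots> = 2/\<epsilon> * (exp (- y 0) - exp (- y n))"
      by (simp only: sum_distrib_left[symmetric] sum_lessThan_telescope'[of "\<lambda>k. exp (- y k)"])
    also have "\<dots> \<le> 2/\<epsilon> * exp (- y 0)" using assms by (simp add: field_simps)
    finally show ?thesis by (simp add: y_def)
  qed
  show summable: "summable (\<lambda>k. 2^k*S * exp (-\<epsilon>*(2^k*S)))"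
    using assms by (intro summableI_nonneg_bounded[OF _ partial_le]) auto
  show "(\<Sum>k. 2^k*S * exp (-\<epsilon>*(2^k*S))) \<le> 2/\<epsilon> * exp (-\<epsilon>*S/2)"
    by (rule suminf_le_const[OF summable partial_le])
qed

lemma powr_le_powr_mult_1_plus_power:
  fixes x T p :: real and N :: nat
  assumes "0 < T" "0 \<le> x" "0 < p" "p \<le> real N"
  shows "x powr p \<le> T powr p * (1 + (x/T)^N)"
proof (cases "x \<le> T")
  case True
  then have "x powr p \<le> T powr p" using assms by (intro powr_mono2) auto
  also have "\<dots> \<le> T powr p * (1 + (x/T)^N)" using assms by simp
  finally show ?thesis .
next
  case False
  then have xT: "x/T \<ge> 1" using assms by simp
  have "(x/T) powr p \<le> (x/T) powr (real N)" using xT assms by (intro powr_mono) auto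
  also have "\<dots> = (x/T)^N" using xT by (simp add: powr_realpow)
  finally have "(x/T) powr p \<le> 1 + (x/T)^N" by simp
  moreover have "x powr p = T powr p * (x/T) powr p" using assms by (simp add: powr_divide)
  ultimately show ?thesis by (simp add: mult_left_mono)
qed

text \<open>Half of the exponential decay of scale \<open>T\<close> absorbs any power \<open>x\<^sup>p\<close>, at the price \<open>T\<^sup>p\<close>.\<close>
lemma powr_mult_exp_scaled_le:
  fixes x T p :: real and N :: nat
  assumes T: "T \<ge> 1" and x: "x \<ge> 1" and p: "0 < p" "p \<le> real N"
  shows "x powr p * exp (-(x-1)/(2*T)) \<le> 3 * (1 + 2^N * fact N) * T powr p"
proof -
  define y where "y = x/(2*T)"
  have y0: "y \<ge> 0" using x T by (simp add: y_def)
  have exp_split: "exp (-(x-1)/(2*T)) = exp (-y) * exp (1/(2*T))"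
    using T by (simp add: y_def field_simps flip: exp_add)
  have "exp (1/(2*T)) \<le> exp 1" using T by simp
  also have "\<dots> \<le> 3" using exp_le by simp
  finally have exp_le_3: "exp (1/(2*T)) \<le> 3" .
  have "y^N * exp (-y) \<le> fact N"
    using power_le_fact_mult_exp[OF y0, of N] by (simp add: exp_minus field_simps)
  then have poly_exp_le: "(1 + 2^N * y^N) * exp (-y) \<le> 1 + 2^N * fact N"
    using y0 by (simp add: algebra_simps add_mono)
  have "x powr p * exp (-(x-1)/(2*T)) \<le> T powr p * (1 + (x/T)^N) * exp (-(x-1)/(2*T))"
    using T x p by (intro mult_right_mono powr_le_powr_mult_1_plus_power) auto
  also have "\<dots> = T powr p * ((1 + 2^N * y^N) * exp (-y)) * exp (1/(2*T))"
    unfolding exp_split y_def by (simp add: power_mult_distrib field_simps)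
  also have "\<dots> \<le> T powr p * (1 + 2^N * fact N) * 3"
    by (intro mult_mono mult_left_mono poly_exp_le exp_le_3) (auto simp: y0)
  finally show ?thesis by (simp only: mult_ac)
qed

lemma c1_le_1: "c1 \<le> 1"
proof -
  let ?g = "\<lambda>u::real. min (2*u) (2 - 2*u) / (u + 1 / (exp 1 - 1))"
  have half_le: "1/2 \<le> 1 / (exp 1 - 1::real)"
    using exp_le exp_gt_one[of 1] by (simp add: field_simps)
  have denom_pos: "u + 1 / (exp 1 - 1) > 0" if "0 \<le> u" for u :: real
    using that half_le by linarith
  have "continuous_on {0..1} ?g"
    using denom_pos by (intro continuous_intros) force
  then have "integral {0..1} ?g \<le> integral {0..1} (\<lambda>u::real. 1)"
  proof (intro integral_le integrable_continuous_interval continuous_on_const)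
    fix u :: real assume u: "u \<in> {0..1}"
    then have "min (2*u) (2 - 2*u) \<le> u + 1/2" by auto
    then have "min (2*u) (2 - 2*u) \<le> u + 1 / (exp 1 - 1)" using half_le by linarith
    moreover have "u + 1 / (exp 1 - 1) > 0" using u denom_pos by simp
    ultimately show "?g u \<le> 1" by (simp add: divide_le_eq_1)
  qed
  then show ?thesis by (simp add: c1_def)
qed

lemma Hoelder_suminf:
  fixes w a b :: "nat \<Rightarrow> real" and u :: real
  assumes w: "\<And>k. w k \<ge> 0" and a: "\<And>k. a k > 0" and b: "\<And>k. b k > 0" and u: "0 < u" "u < 1"
    and sa: "summable (\<lambda>k. w k * a k)" and sb: "summable (\<lambda>k. w k * b k)"
    and A: "(\<Sum>k. w k * a k) > 0" and B: "(\<Sum>k. w k * b k) > 0"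
  shows "summable (\<lambda>k. w k * (a k powr (1-u) * b k powr u))"
    and "(\<Sum>k. w k * (a k powr (1-u) * b k powr u))
           \<le> (\<Sum>k. w k * a k) powr (1-u) * (\<Sum>k. w k * b k) powr u"
proof -
  define A where "A = (\<Sum>k. w k * a k)"
  define B where "B = (\<Sum>k. w k * b k)"
  define M where "M = A powr (1-u) * B powr u"
  have pos: "A > 0" "B > 0" "M > 0" using assms by (auto simp: A_def B_def M_def)
  define g where "g k = M * ((1-u)/A * (w k * a k) + u/B * (w k * b k))" for k
  have term_le: "w k * (a k powr (1-u) * b k powr u) \<le> g k" for k
  proof -
    have "a k powr (1-u) * b k powr u = M * ((a k / A) powr (1-u) * (b k / B) powr u)"
      using pos a b by (simp add: M_def powr_divide field_simps)
    also have "\<dots> \<le> M * ((1-u) * (a k / A) + u * (b k / B))"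
      using pos a b u by (intro mult_left_mono Youngs_inequality_0) auto
    finally have "w k * (a k powr (1-u) * b k powr u) \<le> w k * (M * ((1-u) * (a k / A) + u * (b k / B)))"
      using w by (rule mult_left_mono)
    also have "\<dots> = g k" by (simp add: g_def field_simps)
    finally show ?thesis .
  qed
  have sg: "g sums (M * ((1-u)/A * A + u/B * B))"
    unfolding g_def A_def B_def
    by (intro sums_mult sums_add summable_sums sa sb)
  then have "suminf g = M" using pos by (simp add: sums_iff)
  show sl: "summable (\<lambda>k. w k * (a k powr (1-u) * b k powr u))"
    by (rule summable_comparison_test[OF _ sums_summable[OF sg]])
       (use term_le w a b in \<open>auto intro: exI[of _ 0]\<close>)
  have "(\<Sum>k. w k * (a k powr (1-u) * b k powr u)) \<le> suminf g"
    by (intro suminf_le term_le sl sums_summable[OF sg])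
  then show "(\<Sum>k. w k * (a k powr (1-u) * b k powr u)) \<le> A powr (1-u) * B powr u"
    using \<open>suminf g = M\<close> by (simp add: M_def)
qed

lemma nn_integral_shifted_exp_density_atLeast:
  fixes c T t :: real
  assumes "c \<ge> 0" "T > 0"
  shows "(\<integral>\<^sup>+x. ennreal (c/T * exp (-(x-1)/T)) * indicator {t..} x \<partial>lborel)
           = ennreal (c * exp (-(t-1)/T))"
proof -
  have "(\<integral>\<^sup>+x. ennreal (c/T * exp (-(x-1)/T)) * indicator {t..} x \<partial>lborel)
          = ennreal (0 - (- c * exp (-(t-1)/T)))"
  proof (rule nn_integral_FTC_atLeast)
    fix x
    show "((\<lambda>x. - c * exp (-(x-1)/T)) has_real_derivative c/T * exp (-(x-1)/T)) (at x)"
      using assms by (auto intro!: derivative_eq_intros simp: field_simps)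
    show "0 \<le> c/T * exp (-(x-1)/T)" using assms by simp
  next
    show "((\<lambda>x. - c * exp (-(x-1)/T)) \<longlongrightarrow> 0) at_top"
      using assms by real_asymp
  qed measurable
  then show ?thesis by simp
qed

lemma nn_integral_powr_shifted_exp_le:
  fixes c T p :: real and N :: nat
  assumes c: "c \<ge> 0" and T: "T \<ge> 1" and p: "0 < p" "p \<le> real N"
  shows "(\<integral>\<^sup>+x. ennreal (c/T * exp (-(x-1)/T) * x powr p) * indicator {1..} x \<partial>lborel)
           \<le> ennreal (6 * (1 + 2^N * fact N) * (c * T powr p))"
proof -
  define K where "K = 3 * (1 + 2^N * fact N :: real)"
  have "(\<integral>\<^sup>+x. ennreal (c/T * exp (-(x-1)/T) * x powr p) * indicator {1..} x \<partial>lborel)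
      \<le> (\<integral>\<^sup>+x. ennreal ((2*K*c * T powr p) / (2*T) * exp (-(x-1)/(2*T))) * indicator {1..} x \<partial>lborel)"
  proof (intro nn_integral_mono)
    fix x :: real
    show "ennreal (c/T * exp (-(x-1)/T) * x powr p) * indicator {1..} x
       \<le> ennreal ((2*K*c * T powr p) / (2*T) * exp (-(x-1)/(2*T))) * indicator {1..} x"
    proof (cases "x \<ge> 1")
      case True
      have "c/T * exp (-(x-1)/T) * x powr p
          = c/T * exp (-(x-1)/(2*T)) * (x powr p * exp (-(x-1)/(2*T)))"
        by (simp add: field_simps flip: exp_add)
      also have "\<dots> \<le> c/T * exp (-(x-1)/(2*T)) * (K * T powr p)"
        unfolding K_def using c T True p by (intro mult_left_mono powr_mult_exp_scaled_le) auto
      also have "\<dots> = (2*K*c * T powr p) / (2*T) * exp (-(x-1)/(2*T))"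
        using T by (simp add: field_simps)
      finally show ?thesis using True by (simp add: ennreal_leI)
    qed simp
  qed
  also have "\<dots> = ennreal (2*K*c * T powr p * exp (-(1-1)/(2*T)))"
    using c T by (intro nn_integral_shifted_exp_density_atLeast) (auto simp: K_def)
  finally show ?thesis by (simp add: K_def mult_ac)
qed

lemma log_convex_on_cong:
  assumes "\<And>x. x \<in> S \<Longrightarrow> f x = g x"
  shows "log_convex_on S f \<longleftrightarrow> log_convex_on S g"
proof -
  have "convex_on S (\<lambda>x. ln (f x)) \<longleftrightarrow> convex_on S (\<lambda>x. ln (g x))"
    using assms unfolding convex_on_def convex_def by (auto simp: mult_ac)
  then show ?thesis using assms by (simp add: log_convex_on_def)
qed

locale exp_mixture =
  fixes c T :: "nat \<Rightarrow> real"
  assumes weight_nonneg: "\<And>k. c k \<ge> 0" and scale_ge_1: "\<And>k. T k \<ge> 1"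
    and summable_weight: "summable c"
begin

definition tail :: "real \<Rightarrow> real" where
  "tail t = (\<Sum>k. c k * exp (-(t-1)/T k))"

definition mixture_density :: "real \<Rightarrow> ennreal" where
  "mixture_density x = (\<Sum>k. ennreal (c k / T k * exp (-(x-1)/T k))) * indicator {1..} x"

definition mixture :: "real measure" where
  "mixture = density lborel mixture_density"

lemma measurable_mixture_density[measurable]: "mixture_density \<in> borel_measurable borel"
  unfolding mixture_density_def by measurable

lemma sets_mixture[simp]: "sets mixture = sets borel"
  by (simp add: mixture_def)

lemma summable_tail_series:
  assumes "t \<ge> 1" shows "summable (\<lambda>k. c k * exp (-(t-1)/T k))"
proof (rule summable_comparison_test[OF _ summable_weight])
  have "exp (-(t-1)/T k) \<le> 1" for k
    using assms scale_ge_1[of k] by (simp add: divide_nonpos_pos)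
  then show "\<exists>N. \<forall>k\<ge>N. norm (c k * exp (-(t-1)/T k)) \<le> c k"
    using weight_nonneg by (simp add: abs_mult mult_left_le)
qed

lemma tail_term_le: "t \<ge> 1 \<Longrightarrow> c k * exp (-(t-1)/T k) \<le> tail t"
  unfolding tail_def using sum_le_suminf[OF summable_tail_series, of t "{k}"] weight_nonneg by simp

lemma tail_nonneg: "t \<ge> 1 \<Longrightarrow> tail t \<ge> 0"
  unfolding tail_def using summable_tail_series weight_nonneg by (simp add: suminf_nonneg)

lemma emeasure_mixture_atLeast:
  assumes t: "t \<ge> 1"
  shows "emeasure mixture {t..} = ennreal (tail t)"
proof -
  have "emeasure mixture {t..} = (\<integral>\<^sup>+x. mixture_density x * indicator {t..} x \<partial>lborel)"
    unfolding mixture_def by (rule emeasure_density) auto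
  also have "\<dots> = (\<integral>\<^sup>+x. (\<Sum>k. ennreal (c k / T k * exp (-(x-1)/T k)) * indicator {t..} x) \<partial>lborel)"
    by (rule nn_integral_cong) (use t in \<open>auto simp: mixture_density_def split: split_indicator\<close>)
  also have "\<dots> = (\<Sum>k. \<integral>\<^sup>+x. ennreal (c k / T k * exp (-(x-1)/T k)) * indicator {t..} x \<partial>lborel)"
    by (rule nn_integral_suminf) measurable
  also have "\<dots> = (\<Sum>k. ennreal (c k * exp (-(t-1)/T k)))"
    using weight_nonneg scale_ge_1
    by (intro suminf_cong nn_integral_shifted_exp_density_atLeast) (auto simp: less_le_trans[OF zero_less_one])
  also have "\<dots> = ennreal (tail t)"
    unfolding tail_def using summable_tail_series[OF t] weight_nonneg by (intro suminf_ennreal2) auto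
  finally show ?thesis .
qed

lemma measure_mixture_atLeast: "t \<ge> 1 \<Longrightarrow> measure mixture {t..} = tail t"
  by (simp add: measure_def emeasure_mixture_atLeast tail_nonneg)

lemma prob_space_mixture:
  assumes "suminf c = 1" shows "prob_space mixture"
proof
  have "emeasure mixture (space mixture) = (\<integral>\<^sup>+x. mixture_density x * indicator {1..} x \<partial>lborel)"
    unfolding mixture_def
    by (subst emeasure_density) (auto intro!: nn_integral_cong simp: mixture_density_def split: split_indicator)
  also have "\<dots> = emeasure mixture {1..}"
    unfolding mixture_def by (subst emeasure_density) auto
  also have "\<dots> = 1"
    using assms by (simp add: emeasure_mixture_atLeast tail_def)
  finally show "emeasure mixture (space mixture) = 1" .
qed

lemma tail_pos: "c j > 0 \<Longrightarrow> t \<ge> 1 \<Longrightarrow> tail t > 0"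
  using tail_term_le[of t j] by (smt (verit) exp_gt_zero mult_pos_pos)

text \<open>At a convex combination of \<open>x\<close> and \<open>y\<close> every exponential term is a geometric mean of
  its values at \<open>x\<close> and \<open>y\<close>, so Hoelder's inequality applies.\<close>
lemma log_convex_tail:
  assumes "c j > 0" shows "log_convex_on {1..} tail"
  unfolding log_convex_on_def
proof (intro conjI ballI convex_onI)
  fix u x y :: real assume u: "0 < u" "u < 1" and x: "x \<in> {1..}" and y: "y \<in> {1..}"
  define a where "a k = exp (-(x-1)/T k)" for k
  define b where "b k = exp (-(y-1)/T k)" for k
  have "(1-u) * x + u * y \<ge> (1-u) * 1 + u * 1"
    using u x y by (intro add_mono mult_left_mono) auto
  then have z: "(1-u) * x + u * y \<ge> 1" by simp
  have geo_mean: "exp (-((1-u) * x + u * y - 1)/T k) = a k powr (1-u) * b k powr u" for k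
  proof -
    have "T k > 0" using scale_ge_1[of k] by simp
    then have "-((1-u) * x + u * y - 1)/T k = (1-u) * (-(x-1)/T k) + u * (-(y-1)/T k)"
      by (simp add: field_simps)
    then show ?thesis by (simp add: a_def b_def powr_def exp_add)
  qed
  have "tail ((1-u) * x + u * y) = (\<Sum>k. c k * (a k powr (1-u) * b k powr u))"
    unfolding tail_def geo_mean ..
  also have "\<dots> \<le> (\<Sum>k. c k * a k) powr (1-u) * (\<Sum>k. c k * b k) powr u"
    using x y u weight_nonneg summable_tail_series tail_pos[OF assms]
    by (intro Hoelder_suminf(2)) (auto simp: a_def b_def tail_def)
  also have "\<dots> = tail x powr (1-u) * tail y powr u"
    by (simp add: tail_def a_def b_def)
  finally have "ln (tail ((1-u) * x + u * y)) \<le> ln (tail x powr (1-u) * tail y powr u)"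
    using tail_pos[OF assms z] by (rule ln_mono)
  then show "ln (tail ((1-u) *\<^sub>R x + u *\<^sub>R y)) \<le> (1-u) * ln (tail x) + u * ln (tail y)"
    using tail_pos[OF assms, of x] tail_pos[OF assms, of y] x y by (simp add: ln_mult ln_powr)
qed (use tail_pos[OF assms] in auto)

lemma nn_integral_powr_mixture_le:
  assumes p: "0 < p" "p \<le> real N" and summable: "summable (\<lambda>k. c k * T k powr p)"
  shows "(\<integral>\<^sup>+x. ennreal (x powr p) \<partial>mixture)
           \<le> ennreal (6 * (1 + 2^N * fact N) * (\<Sum>k. c k * T k powr p))"
proof -
  have "(\<integral>\<^sup>+x. ennreal (x powr p) \<partial>mixture) = (\<integral>\<^sup>+x. mixture_density x * ennreal (x powr p) \<partial>lborel)"
    unfolding mixture_def by (rule nn_integral_density) auto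
  also have "\<dots> = (\<integral>\<^sup>+x. (\<Sum>k. ennreal (c k / T k * exp (-(x-1)/T k) * x powr p) * indicator {1..} x) \<partial>lborel)"
  proof (rule nn_integral_cong)
    fix x :: real
    have split: "ennreal (c k / T k * exp (-(x-1)/T k) * x powr p)
        = ennreal (c k / T k * exp (-(x-1)/T k)) * ennreal (x powr p)" for k
      by (rule ennreal_mult'') simp
    show "mixture_density x * ennreal (x powr p)
        = (\<Sum>k. ennreal (c k / T k * exp (-(x-1)/T k) * x powr p) * indicator {1..} x)"
      unfolding mixture_density_def split ennreal_suminf_multc by (simp only: mult_ac)
  qed
  also have "\<dots> = (\<Sum>k. \<integral>\<^sup>+x. ennreal (c k / T k * exp (-(x-1)/T k) * x powr p) * indicator {1..} x \<partial>lborel)"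
    by (rule nn_integral_suminf) measurable
  also have "\<dots> \<le> (\<Sum>k. ennreal (6 * (1 + 2^N * fact N) * (c k * T k powr p)))"
    using weight_nonneg scale_ge_1 p by (intro suminf_le summableI nn_integral_powr_shifted_exp_le)
  also have "\<dots> = ennreal (6 * (1 + 2^N * fact N) * (\<Sum>k. c k * T k powr p))"
    using weight_nonneg summable
    by (simp add: suminf_ennreal2 summable_mult suminf_mult)
  finally show ?thesis .
qed

end


lemma eventually_pos_lt_ln:
  fixes h :: "real \<Rightarrow> real" and r :: real
  assumes h_lim: "filterlim h at_top at_top" and r: "r \<le> 1"
    and growth: "\<forall>\<^sub>F t in at_top. ln (h t) < r * ln (ln t)"
  shows "\<forall>\<^sub>F t in at_top. 0 < h t \<and> h t < ln t"
  using filterlim_at_top_dense[THEN iffD1, OF h_lim, rule_format, of 0] eventually_ge_at_top[of "exp 1"] growth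
proof eventually_elim
  case (elim t)
  then have "ln t \<ge> 1" using ln_ge_iff[of t 1] by (smt (verit) exp_gt_zero)
  then have "r * ln (ln t) \<le> 1 * ln (ln t)" using r by (intro mult_right_mono) auto
  then have "ln (h t) < ln (ln t)" using elim(3) by linarith
  then show ?case using elim(1) \<open>ln t \<ge> 1\<close> by simp
qed

lemma le_Limsup_at_top_if_frequently:
  fixes f :: "'a::linorder \<Rightarrow> 'b::complete_lattice"
  assumes "\<And>x. \<exists>y\<ge>x. l \<le> f y"
  shows "l \<le> Limsup at_top f"
proof (rule Limsup_greatest)
  fix P :: "'a \<Rightarrow> bool" assume "eventually P at_top"
  then obtain x where "\<And>y. y \<ge> x \<Longrightarrow> P y" unfolding eventually_at_top_linorder by blast
  with assms obtain y where "P y" "l \<le> f y" by blast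
  then show "l \<le> (SUP y\<in>Collect P. f y)" by (intro SUP_upper2[of y]) auto
qed

text \<open>\<open>small_weights\<close> makes the heavy weights sum to at most \<open>1/2\<close>, leaving positive mass for
  the component of scale 1.\<close>
locale doubling_mixture =
  fixes \<alpha> S :: real and h :: "real \<Rightarrow> real"
  assumes alpha_pos: "\<alpha> > 0" and S_ge_1: "S \<ge> 1"
    and small_weights: "exp (-\<alpha>*S/2) \<le> \<alpha> / (4 * exp 1)"
    and h_level: "\<And>k. 0 < h (exp (2^k*S)) \<and> h (exp (2^k*S)) \<le> 2^k*S"
begin

definition level :: "nat \<Rightarrow> real" where
  "level k = exp (2^k*S)"

definition heavy_weight :: "nat \<Rightarrow> real" where
  "heavy_weight k = exp 1 * h (level k) * level k powr -\<alpha>"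

definition weight :: "nat \<Rightarrow> real" where
  "weight = case_nat (1 - suminf heavy_weight) heavy_weight"

definition scale :: "nat \<Rightarrow> real" where
  "scale = case_nat 1 level"

lemma level_ge_1: "level k \<ge> 1"
  using S_ge_1 by (simp add: level_def)

lemma level_unbounded: "\<exists>k. x \<le> level k"
proof
  let ?k = "nat \<lceil>x\<rceil>"
  have "x \<le> real ?k" by linarith
  also have "\<dots> \<le> 2 ^ ?k" using of_nat_less_two_power[of ?k, where 'a=real] by linarith
  also have "\<dots> \<le> 2 ^ ?k * S" using S_ge_1 by simp
  also have "\<dots> \<le> level ?k" unfolding level_def by (smt (verit) exp_ge_add_one_self)
  finally show "x \<le> level ?k" .
qed

lemma heavy_weight_nonneg: "heavy_weight k \<ge> 0"
  using h_level[of k] by (simp add: heavy_weight_def level_def)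

lemma heavy_weight_powr_le:
  "heavy_weight k * level k powr p \<le> exp 1 * (2^k*S * exp (-(\<alpha>-p)*(2^k*S)))"
proof -
  have "heavy_weight k * level k powr p = exp 1 * h (level k) * exp (-(\<alpha>-p)*(2^k*S))"
    by (simp add: heavy_weight_def level_def powr_def algebra_simps flip: exp_add)
  then show ?thesis
    using h_level[of k] by (simp add: level_def)
qed

lemma heavy_moment_series:
  assumes "0 \<le> p" "p < \<alpha>"
  shows "summable (\<lambda>k. heavy_weight k * level k powr p)"
    and "(\<Sum>k. heavy_weight k * level k powr p) \<le> 2 * exp 1 / (\<alpha>-p) * exp (-(\<alpha>-p)*S/2)"
proof -
  have dominating: "summable (\<lambda>k. exp 1 * (2^k*S * exp (-(\<alpha>-p)*(2^k*S))))"
    using doubling_exp_series(1)[of "\<alpha>-p" S] assms S_ge_1 by (intro summable_mult) auto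
  show summable: "summable (\<lambda>k. heavy_weight k * level k powr p)"
    using heavy_weight_nonneg heavy_weight_powr_le
    by (intro summable_comparison_test[OF _ dominating]) auto
  have "(\<Sum>k. heavy_weight k * level k powr p) \<le> (\<Sum>k. exp 1 * (2^k*S * exp (-(\<alpha>-p)*(2^k*S))))"
    by (intro suminf_le heavy_weight_powr_le summable dominating)
  also have "\<dots> = exp 1 * (\<Sum>k. 2^k*S * exp (-(\<alpha>-p)*(2^k*S)))"
    using doubling_exp_series(1)[of "\<alpha>-p" S] assms S_ge_1 by (intro suminf_mult) auto
  also have "\<dots> \<le> exp 1 * (2/(\<alpha>-p) * exp (-(\<alpha>-p)*S/2))"
    using doubling_exp_series(2)[of "\<alpha>-p" S] assms S_ge_1 by (intro mult_left_mono) auto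
  finally show "(\<Sum>k. heavy_weight k * level k powr p) \<le> 2 * exp 1 / (\<alpha>-p) * exp (-(\<alpha>-p)*S/2)"
    by (simp add: mult_ac)
qed

lemma summable_heavy_weight: "summable heavy_weight"
  using heavy_moment_series(1)[of 0] alpha_pos by (simp add: level_def)

lemma heavy_weight_sum_le: "suminf heavy_weight \<le> 1/2"
proof -
  have "suminf heavy_weight \<le> 2 * exp 1 / \<alpha> * exp (-\<alpha>*S/2)"
    using heavy_moment_series(2)[of 0] alpha_pos by (simp add: level_def)
  also have "\<dots> \<le> 2 * exp 1 / \<alpha> * (\<alpha> / (4 * exp 1))"
    using small_weights alpha_pos by (intro mult_left_mono) auto
  also have "\<dots> = 1/2" using alpha_pos by simp
  finally show ?thesis .
qed

lemma suminf_weight: "suminf weight = 1"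
  using suminf_split_head[of weight] summable_heavy_weight summable_Suc_iff[of weight]
  by (simp add: weight_def)

lemma weight_0_pos: "weight 0 > 0"
  using heavy_weight_sum_le by (simp add: weight_def)

sublocale exp_mixture weight scale
proof
  show "weight k \<ge> 0" for k
    using heavy_weight_nonneg weight_0_pos by (cases k) (auto simp: weight_def)
  show "scale k \<ge> 1" for k
    using level_ge_1 by (cases k) (auto simp: scale_def)
  show "summable weight"
    using summable_heavy_weight summable_Suc_iff[of weight] by (simp add: weight_def)
qed

lemma moment_series_le:
  assumes "0 < p" "p < \<alpha>"
  shows "summable (\<lambda>k. weight k * scale k powr p)"
    and "(\<Sum>k. weight k * scale k powr p) \<le> (\<alpha> + 2 * exp 1) / (\<alpha> - p)"
proof -
  have shift: "(\<lambda>k. weight (Suc k) * scale (Suc k) powr p) = (\<lambda>k. heavy_weight k * level k powr p)"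
    by (simp add: weight_def scale_def)
  have "summable (\<lambda>k. weight (Suc k) * scale (Suc k) powr p)"
    unfolding shift using heavy_moment_series(1)[of p] assms by simp
  then show summable: "summable (\<lambda>k. weight k * scale k powr p)"
    using summable_Suc_iff[of "\<lambda>k. weight k * scale k powr p"] by (simp only:)
  have "(\<Sum>k. weight k * scale k powr p) = weight 0 + (\<Sum>k. heavy_weight k * level k powr p)"
    using suminf_split_head[OF summable] shift by (simp add: scale_def)
  also have "\<dots> \<le> 1 + 2 * exp 1 / (\<alpha>-p) * exp (-(\<alpha>-p)*S/2)"
    using heavy_moment_series(2)[of p] assms summable_heavy_weight heavy_weight_nonneg
    by (intro add_mono) (auto simp: weight_def suminf_nonneg)
  also have "\<dots> \<le> 1 + 2 * exp 1 / (\<alpha>-p) * 1"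
    using assms S_ge_1 by (intro add_left_mono mult_left_mono) (auto intro: mult_nonpos_nonneg)
  also have "\<dots> \<le> (\<alpha> + 2 * exp 1) / (\<alpha> - p)"
    using assms by (simp add: field_simps)
  finally show "(\<Sum>k. weight k * scale k powr p) \<le> (\<alpha> + 2 * exp 1) / (\<alpha> - p)" .
qed

lemma moments_le_inverse_gap:
  "\<exists>C>0. \<forall>p. 0 < p \<and> p < \<alpha> \<longrightarrow> (\<integral>\<^sup>+x. ennreal (x powr p) \<partial>mixture) \<le> ennreal (C / (\<alpha> - p))"
proof (intro exI conjI allI impI)
  define N where "N = nat \<lceil>\<alpha>\<rceil>"
  show "6 * (1 + 2^N * fact N) * (\<alpha> + 2 * exp 1) > 0"
    using alpha_pos by (simp add: add_pos_pos)
  fix p assume p: "0 < p \<and> p < \<alpha>"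
  then have "p \<le> real N" by (simp add: N_def) linarith
  then have "(\<integral>\<^sup>+x. ennreal (x powr p) \<partial>mixture)
      \<le> ennreal (6 * (1 + 2^N * fact N) * (\<Sum>k. weight k * scale k powr p))"
    using p moment_series_le(1) by (intro nn_integral_powr_mixture_le) auto
  also have "\<dots> \<le> ennreal (6 * (1 + 2^N * fact N) * ((\<alpha> + 2 * exp 1) / (\<alpha> - p)))"
    using p moment_series_le(2) by (intro ennreal_leI mult_left_mono) auto
  finally show "(\<integral>\<^sup>+x. ennreal (x powr p) \<partial>mixture)
      \<le> ennreal (6 * (1 + 2^N * fact N) * (\<alpha> + 2 * exp 1) / (\<alpha> - p))"
    by simp
qed

text \<open>At \<open>t = level k\<close> the component of scale \<open>level k\<close> alone contributes \<open>heavy_weight k / e\<close>.\<close>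
lemma h_le_level_powr_tail: "h (level k) \<le> level k powr \<alpha> * tail (level k)"
proof -
  have "exp (-1) \<le> exp (-(level k - 1) / level k)"
    using level_ge_1[of k] by (simp add: field_simps)
  then have "heavy_weight k * exp (-1) \<le> heavy_weight k * exp (-(level k - 1) / level k)"
    using heavy_weight_nonneg by (rule mult_left_mono)
  also have "\<dots> \<le> tail (level k)"
    using tail_term_le[of "level k" "Suc k", OF level_ge_1] by (simp add: weight_def scale_def)
  finally have "level k powr \<alpha> * (heavy_weight k * exp (-1)) \<le> level k powr \<alpha> * tail (level k)"
    by (simp add: mult_left_mono)
  moreover have "level k powr \<alpha> * (heavy_weight k * exp (-1)) = h (level k)"
    using level_ge_1[of k] by (simp add: heavy_weight_def powr_minus field_simps exp_minus)
  ultimately show ?thesis by simp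
qed

lemma Limsup_tail_ratio_ge_1:
  "Limsup at_top (\<lambda>t. ereal (t powr \<alpha> * measure mixture {t..} / h t)) \<ge> 1"
proof (rule le_Limsup_at_top_if_frequently)
  fix x
  obtain k where "x \<le> level k" using level_unbounded by blast
  moreover have "h (level k) > 0" using h_level[of k] by (simp add: level_def)
  ultimately show "\<exists>t\<ge>x. 1 \<le> ereal (t powr \<alpha> * measure mixture {t..} / h t)"
    using h_le_level_powr_tail[of k] measure_mixture_atLeast[OF level_ge_1[of k]]
    by (intro exI[of _ "level k"]) auto
qed

end

lemma exists_doubling_mixture:
  fixes \<alpha> :: real and h :: "real \<Rightarrow> real"
  assumes alpha_pos: "\<alpha> > 0" and h_lt_ln: "\<forall>\<^sub>F t in at_top. 0 < h t \<and> h t < ln t"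
  shows "\<exists>S. doubling_mixture \<alpha> S h"
proof -
  have "((\<lambda>S. exp (-\<alpha>*S/2)) \<longlongrightarrow> 0) at_top"
    using alpha_pos by real_asymp
  then have small: "\<forall>\<^sub>F S in at_top. exp (-\<alpha>*S/2) < \<alpha> / (4 * exp 1)"
    using alpha_pos by (intro order_tendstoD(2)) auto
  have h_below: "\<forall>\<^sub>F S in at_top. \<forall>t\<ge>exp S. 0 < h t \<and> h t < ln t"
    using filterlim_iff[THEN iffD1, OF exp_at_top, rule_format, OF eventually_all_ge_at_top[OF h_lt_ln]]
    by simp
  have "\<forall>\<^sub>F S in at_top. S \<ge> 1 \<and> exp (-\<alpha>*S/2) < \<alpha> / (4 * exp 1) \<and> (\<forall>t\<ge>exp S. 0 < h t \<and> h t < ln t)"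
    using eventually_ge_at_top[of 1] small h_below by eventually_elim blast
  then obtain S where S: "S \<ge> 1" "exp (-\<alpha>*S/2) < \<alpha> / (4 * exp 1)"
      and h_bound: "\<And>t. t \<ge> exp S \<Longrightarrow> 0 < h t \<and> h t < ln t"
    using eventually_happens'[OF trivial_limit_at_top_linorder] by blast
  have "0 < h (exp (2^k*S)) \<and> h (exp (2^k*S)) \<le> 2^k*S" for k
    using h_bound[of "exp (2^k*S)"] S by (simp add: less_imp_le)
  with S alpha_pos show ?thesis
    by (intro exI[of _ S]) (unfold_locales, auto)
qed

theorem proposition2p5:
  fixes \<alpha> \<rho> :: real and h :: "real \<Rightarrow> real"
  assumes alpha_pos: "\<alpha> > 0"
    and h_nonneg: "\<forall>t\<ge>0. h t \<ge> 0"
    and h_mono: "mono_on {0..} h"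
    and h_lim: "filterlim h at_top at_top"
    and rho: "0 < \<rho>" "\<rho> < c1"
    and h_growth: "\<forall>\<^sub>F t in at_top. ln (h t) < \<rho> * min \<alpha> 1 * ln (ln t)"
  shows "\<exists>\<mu> :: real measure.
           prob_space \<mu> \<and> sets \<mu> = sets borel \<and>
           measure \<mu> {1..} = 1 \<and>
           log_convex_on {1..} (\<lambda>t. measure \<mu> {t..}) \<and>
           (\<exists>C>0. \<forall>p. 0 < p \<and> p < \<alpha> \<longrightarrow>
              (\<integral>\<^sup>+ x. ennreal (x powr p) \<partial>\<mu>) \<le> ennreal (C / (\<alpha> - p))) \<and>
           Limsup at_top (\<lambda>t. ereal (t powr \<alpha> * measure \<mu> {t..} / h t)) \<ge> 1"
proof -
  have "\<rho> * min \<alpha> 1 \<le> \<rho>" using rho by (intro mult_left_le) auto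
  also have "\<dots> \<le> 1" using rho c1_le_1 by linarith
  finally have "\<forall>\<^sub>F t in at_top. 0 < h t \<and> h t < ln t"
    by (rule eventually_pos_lt_ln[OF h_lim _ h_growth])
  then obtain S where "doubling_mixture \<alpha> S h"
    using exists_doubling_mixture[OF alpha_pos] by blast
  then interpret doubling_mixture \<alpha> S h .
  show ?thesis
  proof (intro exI[of _ mixture] conjI)
    show "prob_space mixture" using suminf_weight by (rule prob_space_mixture)
    show "measure mixture {1..} = 1"
      using suminf_weight by (simp add: measure_mixture_atLeast tail_def)
    show "log_convex_on {1..} (\<lambda>t. measure mixture {t..})"
      by (rule log_convex_on_cong[THEN iffD1, OF _ log_convex_tail[OF weight_0_pos]])
         (simp add: measure_mixture_atLeast)
  qed (simp, fact moments_le_inverse_gap, fact Limsup_tail_ratio_ge_1)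
qed

end
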